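(* Suppose there exist an affine plane $\mathrm{AG}(2,k)$ and a resolvable balanced incomplete block design $\mathrm{RBIBD}(v,k,1)$. Then there exists an $\mathrm{RBIBD}(kv,k,1)$ $\mathcal{D}^*$ such that $1$-$\mathrm{BIG}(\mathcal{D}^* )$ is silver.
   Context: A $2$-$(v,k,\lambda)$ design ($2<k<v$) is a pair $(V,\mathcal{B})$ with $|V|=v$ and $\mathcal{B}$ a collection of $k$-subsets of $V$ (blocks) such that every $2$-subset of $V$ lies in exactly $\lambda$ blocks. A parallel class is a set of blocks partitioning $V$. An $\mathrm{RBIBD}(v,k,\lambda)$ is a $2$-$(v,k,\lambda)$ design whose blocks can be partitioned into parallel classes. An affine plane $\mathrm{AG}(2,n)$ is a $2$-$(n^2,n,1)$ design. The $1$-block intersection graph $1$-$\mathrm{BIG}(\mathcal{D})$ has the blocks as vertices, two blocks adjacent iff they intersect in exactly one element. An $\alpha$-set of a graph is a maximum independent set. Let $G$ be an $r$-regular graph and $c$ a proper $(r+1)$-coloring of $G$. A vertex $x$ is rainbow with respect to $c$ if every one of the $r+1$ colors appears on $N[x]=N(x)\cup\{x\}$. Given an $\alpha$-set $I$, $c$ is silver with respect to $I$ if every $x\in I$ is rainbow; $G$ is silver if it admits a silver coloring with respect to some $\alpha$-set. *)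

theory Defs
  imports Main
begin

text \<open>A 2-(v,k,lambda) design on point set V with block collection B
  (blocks form a set; for lambda = 1 repeated blocks are impossible anyway).\<close>
definition design2 :: "'a set \<Rightarrow> 'a set set \<Rightarrow> nat \<Rightarrow> nat \<Rightarrow> nat \<Rightarrow> bool" where
  "design2 V B v k lam \<longleftrightarrow>
     finite V \<and> card V = v \<and> 2 < k \<and> k < v \<and>
     (\<forall>b\<in>B. b \<subseteq> V \<and> card b = k) \<and>
     (\<forall>x\<in>V. \<forall>y\<in>V. x \<noteq> y \<longrightarrow> card {b\<in>B. x \<in> b \<and> y \<in> b} = lam)"

definition parallel_class :: "'a set \<Rightarrow> 'a set set \<Rightarrow> bool" where
  "parallel_class V C \<longleftrightarrow> \<Union>C = V \<and> (\<forall>b\<in>C. \<forall>b'\<in>C. b \<noteq> b' \<longrightarrow> b \<inter> b' = {})"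

definition resolvable :: "'a set \<Rightarrow> 'a set set \<Rightarrow> bool" where
  "resolvable V B \<longleftrightarrow> (\<exists>P. \<Union>P = B \<and> (\<forall>C\<in>P. C \<noteq> {} \<and> parallel_class V C) \<and>
       (\<forall>C\<in>P. \<forall>C'\<in>P. C \<noteq> C' \<longrightarrow> C \<inter> C' = {}))"

definition RBIBD :: "'a set \<Rightarrow> 'a set set \<Rightarrow> nat \<Rightarrow> nat \<Rightarrow> nat \<Rightarrow> bool" where
  "RBIBD V B v k lam \<longleftrightarrow> design2 V B v k lam \<and> resolvable V B"

definition affine_plane :: "'a set \<Rightarrow> 'a set set \<Rightarrow> nat \<Rightarrow> bool" where
  "affine_plane V B n \<longleftrightarrow> design2 V B (n^2) n 1"

definition one_BIG_adj :: "'a set set \<Rightarrow> 'a set \<Rightarrow> 'a set \<Rightarrow> bool" where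
  "one_BIG_adj B b b' \<longleftrightarrow> b \<in> B \<and> b' \<in> B \<and> b \<noteq> b' \<and> card (b \<inter> b') = 1"

definition nbhd :: "'v set \<Rightarrow> ('v \<Rightarrow> 'v \<Rightarrow> bool) \<Rightarrow> 'v \<Rightarrow> 'v set" where
  "nbhd V E x = {y\<in>V. E x y}"

definition regular :: "'v set \<Rightarrow> ('v \<Rightarrow> 'v \<Rightarrow> bool) \<Rightarrow> nat \<Rightarrow> bool" where
  "regular V E r \<longleftrightarrow> (\<forall>x\<in>V. card (nbhd V E x) = r)"

definition independent :: "'v set \<Rightarrow> ('v \<Rightarrow> 'v \<Rightarrow> bool) \<Rightarrow> 'v set \<Rightarrow> bool" where
  "independent V E I \<longleftrightarrow> I \<subseteq> V \<and> (\<forall>x\<in>I. \<forall>y\<in>I. \<not> E x y)"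

definition alpha_set :: "'v set \<Rightarrow> ('v \<Rightarrow> 'v \<Rightarrow> bool) \<Rightarrow> 'v set \<Rightarrow> bool" where
  "alpha_set V E I \<longleftrightarrow> independent V E I \<and> (\<forall>J. independent V E J \<longrightarrow> card J \<le> card I)"

definition proper_coloring :: "'v set \<Rightarrow> ('v \<Rightarrow> 'v \<Rightarrow> bool) \<Rightarrow> nat \<Rightarrow> ('v \<Rightarrow> nat) \<Rightarrow> bool" where
  "proper_coloring V E m c \<longleftrightarrow> (\<forall>x\<in>V. c x < m) \<and> (\<forall>x\<in>V. \<forall>y\<in>V. E x y \<longrightarrow> c x \<noteq> c y)"

definition rainbow :: "'v set \<Rightarrow> ('v \<Rightarrow> 'v \<Rightarrow> bool) \<Rightarrow> nat \<Rightarrow> ('v \<Rightarrow> nat) \<Rightarrow> 'v \<Rightarrow> bool" where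
  "rainbow V E m c x \<longleftrightarrow> c ` (insert x (nbhd V E x)) = {0..<m}"

definition silver :: "'v set \<Rightarrow> ('v \<Rightarrow> 'v \<Rightarrow> bool) \<Rightarrow> bool" where
  "silver V E \<longleftrightarrow> (\<exists>r. regular V E r \<and>
     (\<exists>I c. alpha_set V E I \<and> proper_coloring V E (r+1) c \<and> (\<forall>x\<in>I. rainbow V E (r+1) c x)))"

end

theory Submission
  imports Defs "HOL-Library.Disjoint_Sets"
begin

(* Construction (the paper's proof): let D be an RBIBD(v,k,1) on V with resolution P and let
   AG(2,k) have point set A.  Fix one direction (parallel class) G of the affine plane.  Replace
   each point x of V by a fibre F x of k new points, and for every block b of D identify the
   affine plane with the k fibres over b by a bijection Th b that maps the k lines of G onto
   these k fibres.  The new design D* has as blocks the fibres and the images Th b ` L of all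
   lines L outside G.  It is a 2-(kv,k,1) design; it is resolved by the fibres together with
   the classes {Th b ` L | b in C, L in Q} for C in P and Q a direction other than G; the
   fibres form an alpha-set of its 1-block intersection graph, and colouring a fibre with a
   colour of its own and Th b ` L with (class of b, L) is proper and rainbow at every fibre. *)

definition resolution :: "'a set \<Rightarrow> 'a set set \<Rightarrow> 'a set set set \<Rightarrow> bool" where
  "resolution V B P \<longleftrightarrow> \<Union>P = B \<and> (\<forall>C\<in>P. C \<noteq> {} \<and> parallel_class V C) \<and>
     (\<forall>C\<in>P. \<forall>C'\<in>P. C \<noteq> C' \<longrightarrow> C \<inter> C' = {})"

lemma resolvable_iff_resolution: "resolvable V B \<longleftrightarrow> (\<exists>P. resolution V B P)"
  unfolding resolvable_def resolution_def ..

lemma parallel_class_unique: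
  assumes "parallel_class V C" "b \<in> C" "b' \<in> C" "x \<in> b" "x \<in> b'"
  shows "b = b'"
  using assms unfolding parallel_class_def by blast

lemma resolution_class_unique:
  assumes "resolution V B P" "C \<in> P" "C' \<in> P" "b \<in> C" "b \<in> C'"
  shows "C = C'"
  using assms unfolding resolution_def by blast

lemma resolution_memD:
  assumes "resolution V B P" "C \<in> P"
  shows "C \<subseteq> B" "C \<noteq> {}" "parallel_class V C" "\<Union>C = V"
    "\<And>b b'. b \<in> C \<Longrightarrow> b' \<in> C \<Longrightarrow> b \<noteq> b' \<Longrightarrow> b \<inter> b' = {}"
  using assms unfolding resolution_def parallel_class_def by blast+

text \<open>A graph is silver as soon as some vertex colouring (with an arbitrary colour type)
  is proper and maps the closed neighbourhood of every vertex of a non-empty alpha-set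
  bijectively onto the set of all colours used: renumbering the colours by 0, ..., r
  then gives the required proper (r+1)-colouring.\<close>
lemma silverI:
  fixes col :: "'v \<Rightarrow> 'c"
  assumes fin: "finite D" and reg: "regular D E r" and alpha: "alpha_set D E I"
    and I_ne: "I \<noteq> {}" and irrefl: "\<And>x. \<not> E x x"
    and proper: "\<And>x y. x \<in> D \<Longrightarrow> y \<in> D \<Longrightarrow> E x y \<Longrightarrow> col x \<noteq> col y"
    and bij: "\<And>x. x \<in> I \<Longrightarrow> bij_betw col (insert x (nbhd D E x)) (col ` D)"
  shows "silver D E"
proof -
  obtain x0 where x0: "x0 \<in> I" using I_ne by auto
  then have "x0 \<in> D" using alpha unfolding alpha_set_def independent_def by auto
  moreover have "x0 \<notin> nbhd D E x0" "finite (nbhd D E x0)"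
    using irrefl fin unfolding nbhd_def by auto
  ultimately have "card (insert x0 (nbhd D E x0)) = r + 1"
    using reg unfolding regular_def by simp
  then have card_colours: "card (col ` D) = r + 1"
    using bij_betw_same_card[OF bij[OF x0]] by simp
  obtain h where h: "bij_betw h (col ` D) {0..<r + 1}"
    using ex_bij_betw_finite_nat[of "col ` D"] fin card_colours by auto
  have "proper_coloring D E (r + 1) (h \<circ> col)"
    unfolding proper_coloring_def
  proof (intro conjI ballI impI)
    show "(h \<circ> col) x < r + 1" if "x \<in> D" for x
      using bij_betw_apply[OF h] that by simp
    show "(h \<circ> col) x \<noteq> (h \<circ> col) y" if "x \<in> D" "y \<in> D" "E x y" for x y
      using proper[OF that] bij_betw_imp_inj_on[OF h] that by (simp add: inj_on_eq_iff)
  qed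
  moreover have "rainbow D E (r + 1) (h \<circ> col) x" if "x \<in> I" for x
  proof -
    have "(h \<circ> col) ` insert x (nbhd D E x) = h ` col ` D"
      using bij_betw_imp_surj_on[OF bij[OF that]] by (simp only: image_comp[symmetric])
    then show ?thesis unfolding rainbow_def using bij_betw_imp_surj_on[OF h] by simp
  qed
  ultimately show ?thesis
    unfolding silver_def using reg alpha by blast
qed

section \<open>Designs with lambda = 1\<close>

text \<open>A 2-(n, k, 1) design: the common setting of the affine plane, of the given RBIBD and of the
  constructed design.\<close>
locale steiner_system =
  fixes W :: "'a set" and D :: "'a set set" and n k :: nat
  assumes design: "design2 W D n k 1"
begin

lemma finite_points: "finite W" and card_points: "card W = n" and k_gt_2: "2 < k"
  and n_gt_k: "k < n"
  using design unfolding design2_def by auto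

lemma block_subset: "b \<in> D \<Longrightarrow> b \<subseteq> W"
  and block_card: "b \<in> D \<Longrightarrow> card b = k"
  using design unfolding design2_def by auto

lemma block_finite: "b \<in> D \<Longrightarrow> finite b"
  using block_subset finite_points finite_subset by blast

lemma finite_blocks: "finite D"
  using block_subset finite_points by (meson Pow_iff finite_Pow_iff finite_subset subsetI)

lemma unique_block:
  assumes "x \<in> W" "y \<in> W" "x \<noteq> y"
  shows "\<exists>!b. b \<in> D \<and> x \<in> b \<and> y \<in> b"
proof -
  have "card {b\<in>D. x \<in> b \<and> y \<in> b} = 1" using assms design unfolding design2_def by auto
  then obtain b0 where "{b\<in>D. x \<in> b \<and> y \<in> b} = {b0}" by (erule card_1_singletonE)
  then show ?thesis by (auto simp: set_eq_iff)
qed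

lemma block_eq:
  assumes "b \<in> D" "b' \<in> D" "x \<in> b" "y \<in> b" "x \<in> b'" "y \<in> b'" "x \<noteq> y"
  shows "b = b'"
  using unique_block[of x y] assms block_subset by blast

lemma inter_card_le_1:
  assumes "b \<in> D" "b' \<in> D" "b \<noteq> b'"
  shows "card (b \<inter> b') \<le> 1"
proof -
  have "\<forall>x\<in>b \<inter> b'. \<forall>y\<in>b \<inter> b'. x = y" using assms block_eq by blast
  then show ?thesis using assms block_finite by (simp add: card_le_Suc0_iff_eq)
qed

lemma adj_iff: "one_BIG_adj D b b' \<longleftrightarrow> b \<in> D \<and> b' \<in> D \<and> b \<noteq> b' \<and> b \<inter> b' \<noteq> {}"
proof
  assume "b \<in> D \<and> b' \<in> D \<and> b \<noteq> b' \<and> b \<inter> b' \<noteq> {}"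
  moreover from this have "card (b \<inter> b') \<le> 1" "finite (b \<inter> b')"
    using inter_card_le_1 block_finite by auto
  ultimately show "one_BIG_adj D b b'"
    unfolding one_BIG_adj_def by (metis card_0_eq le_antisym less_one not_le)
qed (auto simp: one_BIG_adj_def)

text \<open>The blocks through p partition the remaining n - 1 points into sets of size k - 1.\<close>
lemma replication_eq:
  assumes "p \<in> W"
  shows "card {b\<in>D. p \<in> b} * (k - 1) = n - 1"
proof -
  let ?S = "{b\<in>D. p \<in> b}"
  have "card ?S * (k - 1) = (\<Sum>b\<in>?S. card (b - {p}))"
    using block_card block_finite by (simp add: sum.cong)
  also have "\<dots> = card (\<Union>b\<in>?S. b - {p})"
  proof (rule card_UN_disjoint[symmetric])
    show "finite ?S" using finite_blocks by simp
    show "\<forall>b\<in>?S. finite (b - {p})" using block_finite by simp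
    show "\<forall>b\<in>?S. \<forall>b'\<in>?S. b \<noteq> b' \<longrightarrow> (b - {p}) \<inter> (b' - {p}) = {}"
      using block_eq by blast
  qed
  also have "(\<Union>b\<in>?S. b - {p}) = W - {p}"
  proof
    show "(\<Union>b\<in>?S. b - {p}) \<subseteq> W - {p}" using block_subset by blast
    show "W - {p} \<subseteq> (\<Union>b\<in>?S. b - {p})"
    proof
      fix q assume "q \<in> W - {p}"
      then obtain b where "b \<in> D" "p \<in> b" "q \<in> b" using unique_block[OF assms, of q] by auto
      with \<open>q \<in> W - {p}\<close> show "q \<in> (\<Union>b\<in>?S. b - {p})" by blast
    qed
  qed
  finally show ?thesis
    using assms finite_points card_points by (simp add: card_Diff_singleton)
qed

definition replication :: nat where
  "replication = (n - 1) div (k - 1)"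

lemma card_blocks_through: "p \<in> W \<Longrightarrow> card {b\<in>D. p \<in> b} = replication"
proof -
  assume "p \<in> W"
  have "k - 1 \<noteq> 0" using k_gt_2 by simp
  then show ?thesis
    using replication_eq[OF \<open>p \<in> W\<close>] unfolding replication_def
    by (metis nonzero_mult_div_cancel_right)
qed

text \<open>A block meets replication - 1 further blocks in each of its k points,
  and these are all distinct; so the 1-block intersection graph is regular.\<close>
lemma BIG_regular: "regular D (one_BIG_adj D) (k * (replication - 1))"
  unfolding regular_def
proof
  fix b assume b: "b \<in> D"
  have "nbhd D (one_BIG_adj D) b = (\<Union>p\<in>b. {b'\<in>D. p \<in> b'} - {b})"
    unfolding nbhd_def adj_iff using b by auto
  moreover have "card (\<Union>p\<in>b. {b'\<in>D. p \<in> b'} - {b}) = (\<Sum>p\<in>b. card ({b'\<in>D. p \<in> b'} - {b}))"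
  proof (rule card_UN_disjoint)
    show "finite b" "\<forall>p\<in>b. finite ({b'\<in>D. p \<in> b'} - {b})"
      using b block_finite finite_blocks by auto
    show "\<forall>p\<in>b. \<forall>q\<in>b. p \<noteq> q \<longrightarrow> ({b'\<in>D. p \<in> b'} - {b}) \<inter> ({b'\<in>D. q \<in> b'} - {b}) = {}"
      using b block_eq by blast
  qed
  moreover have "card ({b'\<in>D. p \<in> b'} - {b}) = replication - 1" if "p \<in> b" for p
  proof -
    have "p \<in> W" using that b block_subset by blast
    then show ?thesis using that b finite_blocks card_blocks_through by (simp add: card_Diff_singleton)
  qed
  ultimately show "card (nbhd D (one_BIG_adj D) b) = k * (replication - 1)"
    using b block_card by simp
qed

lemma card_Union_disjoint_blocks:
  assumes "J \<subseteq> D" "pairwise disjnt J"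
  shows "card (\<Union>J) = card J * k"
proof -
  have "card (\<Union>J) = sum card J"
    using assms block_finite by (intro card_Union_disjoint) auto
  also have "\<dots> = (\<Sum>b\<in>J. k)" using assms block_card by (intro sum.cong) auto
  finally show ?thesis by simp
qed

lemma parallel_class_card:
  assumes "C \<subseteq> D" "parallel_class W C"
  shows "card C * k = n"
  using assms card_Union_disjoint_blocks[of C] card_points
  unfolding parallel_class_def pairwise_def disjnt_def by auto

text \<open>An independent set of the 1-block intersection graph consists of pairwise disjoint
  blocks, so it has at most n div k elements; a parallel class attains the bound.\<close>
lemma parallel_class_alpha_set:
  assumes "C \<subseteq> D" "parallel_class W C"
  shows "alpha_set D (one_BIG_adj D) C"
  unfolding alpha_set_def
proof
  show "independent D (one_BIG_adj D) C"
    using assms unfolding independent_def parallel_class_def adj_iff by blast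
  show "\<forall>J. independent D (one_BIG_adj D) J \<longrightarrow> card J \<le> card C"
  proof (intro allI impI)
    fix J assume J: "independent D (one_BIG_adj D) J"
    then have JD: "J \<subseteq> D" and "pairwise disjnt J"
      unfolding independent_def pairwise_def disjnt_def adj_iff by blast+
    then have "card J * k = card (\<Union>J)" using card_Union_disjoint_blocks by simp
    also have "\<dots> \<le> n" using JD block_subset finite_points card_points
      by (metis Sup_le_iff card_mono subset_iff)
    also have "\<dots> = card C * k" using parallel_class_card[OF assms] by simp
    finally show "card J \<le> card C" using k_gt_2 by simp
  qed
qed

text \<open>A point p outside a block L is joined to each of the k points of L by its own block,
  so exactly k blocks through p meet L.\<close>
lemma card_blocks_through_meeting:
  assumes L: "L \<in> D" and p: "p \<in> W" "p \<notin> L"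
  shows "card {M\<in>D. p \<in> M \<and> M \<inter> L \<noteq> {}} = k"
proof -
  let ?T = "{M\<in>D. p \<in> M \<and> M \<inter> L \<noteq> {}}"
  have meet_one: "card (M \<inter> L) = 1" if M: "M \<in> ?T" for M
  proof -
    have "M \<noteq> L" using M p by auto
    then have "card (M \<inter> L) \<le> 1" using M L inter_card_le_1 by simp
    moreover have "card (M \<inter> L) \<noteq> 0" using M block_finite[OF L] by simp
    ultimately show ?thesis by simp
  qed
  have "L = (\<Union>M\<in>?T. M \<inter> L)"
  proof
    show "L \<subseteq> (\<Union>M\<in>?T. M \<inter> L)"
    proof
      fix q assume "q \<in> L"
      moreover have "q \<in> W" "q \<noteq> p" using \<open>q \<in> L\<close> L p block_subset by auto
      ultimately obtain M where "M \<in> D" "p \<in> M" "q \<in> M" using unique_block[OF p(1)] by blast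
      with \<open>q \<in> L\<close> show "q \<in> (\<Union>M\<in>?T. M \<inter> L)" by blast
    qed
  qed blast
  then have "card L = card (\<Union>M\<in>?T. M \<inter> L)" by simp
  also have "card (\<Union>M\<in>?T. M \<inter> L) = (\<Sum>M\<in>?T. card (M \<inter> L))"
  proof (rule card_UN_disjoint)
    show "finite ?T" "\<forall>M\<in>?T. finite (M \<inter> L)" using finite_blocks block_finite[OF L] by auto
    show "\<forall>M\<in>?T. \<forall>M'\<in>?T. M \<noteq> M' \<longrightarrow> (M \<inter> L) \<inter> (M' \<inter> L) = {}"
    proof (intro ballI impI equals0I)
      fix M M' q assume MM': "M \<in> ?T" "M' \<in> ?T" "M \<noteq> M'" and q: "q \<in> (M \<inter> L) \<inter> (M' \<inter> L)"
      then have "q \<noteq> p" using p(2) by blast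
      then show False using block_eq[of M M' p q] MM' q by blast
    qed
  qed
  also have "\<dots> = card ?T" using meet_one by simp
  finally show ?thesis using block_card[OF L] by simp
qed

end

section \<open>Affine planes\<close>

locale affine_plane_design = steiner_system A AB "k\<^sup>2" k
  for A :: "'a set" and AB :: "'a set set" and k :: nat
begin

text \<open>Each point is on k + 1 lines, since (k + 1)(k - 1) = k^2 - 1.\<close>
lemma card_lines_through:
  assumes "p \<in> A"
  shows "card {L\<in>AB. p \<in> L} = k + 1"
proof -
  obtain m where m: "k = Suc m" using k_gt_2 by (cases k) auto
  have "k\<^sup>2 - 1 = (k + 1) * (k - 1)" unfolding m by (simp add: power2_eq_square)
  then have "card {L\<in>AB. p \<in> L} * (k - 1) = (k + 1) * (k - 1)"
    using replication_eq[OF assms] by simp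
  moreover have "k - 1 \<noteq> 0" using k_gt_2 by simp
  ultimately show ?thesis by (metis mult_cancel2)
qed

text \<open>Playfair's axiom: of the k + 1 lines through a point outside L exactly k meet L.\<close>
lemma playfair:
  assumes L: "L \<in> AB" and p: "p \<in> A" "p \<notin> L"
  shows "\<exists>!M. M \<in> AB \<and> p \<in> M \<and> M \<inter> L = {}"
proof -
  let ?S = "{M\<in>AB. p \<in> M}" and ?T = "{M\<in>AB. p \<in> M \<and> M \<inter> L \<noteq> {}}"
  have "card (?S - ?T) = card ?S - card ?T"
    using finite_blocks by (intro card_Diff_subset) auto
  also have "\<dots> = 1" using card_lines_through[OF p(1)] card_blocks_through_meeting[OF L p] by simp
  moreover have "?S - ?T = {M. M \<in> AB \<and> p \<in> M \<and> M \<inter> L = {}}" by blast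
  ultimately have "card {M. M \<in> AB \<and> p \<in> M \<and> M \<inter> L = {}} = 1" by simp
  then obtain M0 where "{M. M \<in> AB \<and> p \<in> M \<and> M \<inter> L = {}} = {M0}" by (erule card_1_singletonE)
  then show ?thesis by (auto simp: set_eq_iff)
qed

definition direction :: "'a set \<Rightarrow> 'a set set" where
  "direction L = {M\<in>AB. L = M \<or> L \<inter> M = {}}"

lemma direction_self: "L \<in> AB \<Longrightarrow> L \<in> direction L"
  and direction_sym: "L \<in> AB \<Longrightarrow> M \<in> direction L \<Longrightarrow> L \<in> direction M"
  and direction_subset: "direction L \<subseteq> AB"
  unfolding direction_def by auto

text \<open>By Playfair's axiom, being parallel is transitive.\<close>
lemma direction_trans:
  assumes L: "L \<in> AB" and M: "M \<in> direction L" and N: "N \<in> direction M"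
  shows "N \<in> direction L"
proof (cases "L = M \<or> M = N \<or> L = N")
  case True
  then show ?thesis using M N L direction_self by auto
next
  case False
  then have LM: "L \<inter> M = {}" and MN: "M \<inter> N = {}" and MN_lines: "M \<in> AB" "N \<in> AB"
    using M N unfolding direction_def by auto
  have "L \<inter> N = {}"
  proof (rule ccontr)
    assume "L \<inter> N \<noteq> {}"
    then obtain p where p: "p \<in> L" "p \<in> N" by auto
    then have "p \<in> A" "p \<notin> M" using L LM block_subset by auto
    then have "L = N"
      by (rule ex1E[OF playfair[OF MN_lines(1)]]) (use L MN_lines p LM MN in blast)
    then show False using False by simp
  qed
  then show ?thesis using MN_lines unfolding direction_def by auto
qed

lemma direction_eq:
  assumes "L \<in> AB" "M \<in> direction L"
  shows "direction M = direction L"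
proof
  show "direction M \<subseteq> direction L" using direction_trans[OF assms] by blast
  have "M \<in> AB" using assms(2) direction_subset by blast
  then show "direction L \<subseteq> direction M" using direction_trans direction_sym[OF assms] by blast
qed

text \<open>Each direction is a parallel class: Playfair's axiom supplies, through every point,
  a line of the direction.\<close>
lemma direction_parallel_class:
  assumes L: "L \<in> AB"
  shows "parallel_class A (direction L)"
  unfolding parallel_class_def
proof
  have "A \<subseteq> \<Union>(direction L)"
  proof
    fix p assume p: "p \<in> A"
    show "p \<in> \<Union>(direction L)"
    proof (cases "p \<in> L")
      case False
      then obtain M where "M \<in> AB" "p \<in> M" "M \<inter> L = {}" using ex1_implies_ex[OF playfair[OF L p]] by blast
      then show ?thesis unfolding direction_def by auto
    qed (use direction_self[OF L] in auto)
  qed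
  then show "\<Union>(direction L) = A" using block_subset direction_subset by blast
  show "\<forall>M\<in>direction L. \<forall>M'\<in>direction L. M \<noteq> M' \<longrightarrow> M \<inter> M' = {}"
  proof (intro ballI impI)
    fix M M' assume M: "M \<in> direction L" "M' \<in> direction L" "M \<noteq> M'"
    then have "M' \<in> direction M" using direction_eq[OF L M(1)] by simp
    then show "M \<inter> M' = {}" using M(3) unfolding direction_def by simp
  qed
qed

lemma directions_resolution: "resolution A AB (direction ` AB)"
  unfolding resolution_def
proof (intro conjI ballI impI)
  show "\<Union>(direction ` AB) = AB" using direction_self direction_subset by blast
  show "Q \<noteq> {}" "parallel_class A Q" if "Q \<in> direction ` AB" for Q
    using that direction_self direction_parallel_class by blast+
  show "Q \<inter> Q' = {}" if Q: "Q \<in> direction ` AB" "Q' \<in> direction ` AB" "Q \<noteq> Q'" for Q Q'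
  proof (rule equals0I)
    fix M assume M: "M \<in> Q \<inter> Q'"
    obtain L L' where L: "L \<in> AB" "Q = direction L" and L': "L' \<in> AB" "Q' = direction L'"
      using Q by blast
    have "direction M = Q" using direction_eq[OF L(1)] M L(2) by blast
    moreover have "direction M = Q'" using direction_eq[OF L'(1)] M L'(2) by blast
    ultimately show False using Q(3) by simp
  qed
qed

lemma resolution_with_transversal_class:
  obtains PA G where "resolution A AB PA" "G \<in> PA" "card G = k"
    "\<And>L g. L \<in> AB \<Longrightarrow> L \<notin> G \<Longrightarrow> g \<in> G \<Longrightarrow> L \<inter> g \<noteq> {}"
proof -
  have "\<not> card A \<le> Suc 0" using k_gt_2 n_gt_k card_points by linarith
  then obtain p q where "p \<in> A" "q \<in> A" "p \<noteq> q"
    using finite_points card_le_Suc0_iff_eq by blast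
  then have "\<exists>!g. g \<in> AB \<and> p \<in> g \<and> q \<in> g" by (rule unique_block)
  then obtain g0 where g0: "g0 \<in> AB" by auto
  let ?PA = "direction ` AB" and ?G = "direction g0"
  have res: "resolution A AB ?PA" by (rule directions_resolution)
  have "card ?G * k = k * k"
    using parallel_class_card[OF direction_subset direction_parallel_class[OF g0]]
    by (simp add: power2_eq_square)
  then have card_G: "card ?G = k" using k_gt_2 by simp
  have meets: "L \<inter> g \<noteq> {}" if "L \<in> AB" "L \<notin> ?G" "g \<in> ?G" for L g
  proof -
    have "direction g = ?G" using direction_eq[OF g0 that(3)] .
    then have "L \<notin> direction g" using that(2) by simp
    then show ?thesis using that(1) unfolding direction_def by auto
  qed
  show ?thesis by (rule that[OF res _ card_G meets]) (use g0 in simp)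
qed

end

section \<open>The product construction\<close>

locale product_construction =
  A: affine_plane_design A AB k + D: steiner_system V B v k
  for A :: "'a set" and AB :: "'a set set" and k :: nat
    and V :: "'b set" and B :: "'b set set" and v :: nat +
  fixes PA :: "'a set set set" and G :: "'a set set" and P :: "'b set set set"
    and W :: "'c set" and F :: "'b \<Rightarrow> 'c set" and Th :: "'b set \<Rightarrow> 'a \<Rightarrow> 'c"
  assumes resolution_A: "resolution A AB PA" and G_in_PA: "G \<in> PA"
    and G_transversal: "\<And>L g. L \<in> AB \<Longrightarrow> L \<notin> G \<Longrightarrow> g \<in> G \<Longrightarrow> L \<inter> g \<noteq> {}"
    and resolution_D: "resolution V B P"
    and fibre_card: "\<And>x. x \<in> V \<Longrightarrow> card (F x) = k"
    and fibres_disjoint: "\<And>x y. x \<in> V \<Longrightarrow> y \<in> V \<Longrightarrow> x \<noteq> y \<Longrightarrow> F x \<inter> F y = {}"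
    and fibres_cover: "\<Union>(F ` V) = W"
    and Th_bij: "\<And>b. b \<in> B \<Longrightarrow> bij_betw (Th b) A (\<Union>x\<in>b. F x)"
    and Th_G_lines: "\<And>b g. b \<in> B \<Longrightarrow> g \<in> G \<Longrightarrow> \<exists>x\<in>b. Th b ` g = F x"
begin

lemma fibre_finite: "x \<in> V \<Longrightarrow> finite (F x)"
  and fibre_nonempty: "x \<in> V \<Longrightarrow> F x \<noteq> {}"
  using fibre_card A.k_gt_2 by (metis card.infinite not_less_zero, force)

lemma fibre_unique: "x \<in> V \<Longrightarrow> y \<in> V \<Longrightarrow> w \<in> F x \<Longrightarrow> w \<in> F y \<Longrightarrow> x = y"
  using fibres_disjoint by blast

lemma card_W: "card W = k * v"
proof -
  have "card W = (\<Sum>x\<in>V. card (F x))"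
    unfolding fibres_cover[symmetric] using D.finite_points fibre_finite fibres_disjoint
    by (intro card_UN_disjoint) auto
  then show ?thesis using fibre_card D.card_points by simp
qed

lemma Th_inj: "b \<in> B \<Longrightarrow> inj_on (Th b) A"
  using Th_bij by (rule bij_betw_imp_inj_on)

lemma Th_image: "b \<in> B \<Longrightarrow> Th b ` A = (\<Union>x\<in>b. F x)"
  using Th_bij by (rule bij_betw_imp_surj_on)

lemma lift_subset:
  assumes "b \<in> B" "L \<in> AB"
  shows "Th b ` L \<subseteq> (\<Union>x\<in>b. F x)"
  using image_mono[OF A.block_subset[OF assms(2)], of "Th b"] Th_image[OF assms(1)] by simp

lemma lift_card:
  assumes "b \<in> B" "L \<in> AB"
  shows "card (Th b ` L) = k"
  using card_image[OF inj_on_subset[OF Th_inj A.block_subset]] A.block_card assms by simp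

lemma G_line_onto_fibre:
  assumes b: "b \<in> B" and x: "x \<in> b"
  obtains g where "g \<in> G" "Th b ` g = F x"
proof -
  have xV: "x \<in> V" using b x D.block_subset by blast
  obtain w where w: "w \<in> F x" using fibre_nonempty[OF xV] by blast
  then obtain a where a: "a \<in> A" "w = Th b a" using Th_image[OF b] x by blast
  have "\<Union>G = A" using resolution_A G_in_PA unfolding resolution_def parallel_class_def by blast
  then obtain g where g: "g \<in> G" "a \<in> g" using a(1) by blast
  obtain z where z: "z \<in> b" "Th b ` g = F z" using Th_G_lines[OF b g(1)] by blast
  moreover have "w \<in> F z" using a g z by blast
  ultimately have "z = x" using fibre_unique[OF _ xV _ w] b D.block_subset by blast
  then show ?thesis using that g z by blast
qed

lemma G_line_in_one_fibre:
  assumes b: "b \<in> B" and g: "g \<in> G" and xy: "x \<in> V" "y \<in> V"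
    and meets: "p \<in> Th b ` g \<inter> F x" "q \<in> Th b ` g \<inter> F y"
  shows "x = y"
proof -
  obtain z where z: "z \<in> b" "Th b ` g = F z" using Th_G_lines[OF b g] by blast
  then have "z \<in> V" using b D.block_subset by blast
  then show ?thesis using fibre_unique z(2) meets xy by blast
qed

text \<open>The image of a line outside G meets each fibre over b in exactly one point
  (because the line meets each line of G once), and misses all other fibres.\<close>
lemma lift_meets_fibre:
  assumes b: "b \<in> B" and L: "L \<in> AB" "L \<notin> G" and x: "x \<in> b"
  shows "card (Th b ` L \<inter> F x) = 1"
proof -
  obtain g where g: "g \<in> G" "Th b ` g = F x" using G_line_onto_fibre[OF b x] by blast
  have gAB: "g \<in> AB" using g resolution_A G_in_PA unfolding resolution_def by blast
  have "Th b ` L \<inter> F x = Th b ` (L \<inter> g)"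
    using inj_on_image_Int[OF Th_inj[OF b] A.block_subset[OF L(1)] A.block_subset[OF gAB]] g by simp
  moreover have "card (Th b ` (L \<inter> g)) = card (L \<inter> g)"
    using Th_inj[OF b] A.block_subset[OF L(1)] by (intro card_image) (auto intro: inj_on_subset)
  moreover have "card (L \<inter> g) \<le> 1" using A.inter_card_le_1[OF L(1) gAB] L g by auto
  moreover have "card (L \<inter> g) \<noteq> 0"
    using G_transversal[OF L g(1)] A.block_finite[OF L(1)] by simp
  ultimately show ?thesis by simp
qed

lemma lift_misses_fibre:
  assumes "b \<in> B" "L \<in> AB" "x \<in> V" "x \<notin> b"
  shows "Th b ` L \<inter> F x = {}"
proof (rule equals0I)
  fix w assume w: "w \<in> Th b ` L \<inter> F x"
  then obtain y where "y \<in> b" "w \<in> F y" using lift_subset[OF assms(1,2)] by blast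
  moreover from this have "y = x" using fibre_unique assms(1,3) w D.block_subset by blast
  ultimately show False using assms(4) by blast
qed

lemma lift_fibre_at_most_one:
  assumes "b \<in> B" "L \<in> AB" "L \<notin> G" "x \<in> V" "p \<in> Th b ` L \<inter> F x" "q \<in> Th b ` L \<inter> F x"
  shows "p = q"
proof -
  have "x \<in> b" using lift_misses_fibre assms by blast
  then have "card (Th b ` L \<inter> F x) = 1" using lift_meets_fibre assms by blast
  then obtain z where "Th b ` L \<inter> F x = {z}" by (erule card_1_singletonE)
  then show ?thesis using assms(5,6) by auto
qed

lemma lift_support:
  assumes "b \<in> B" "L \<in> AB" "L \<notin> G"
  shows "{x\<in>V. Th b ` L \<inter> F x \<noteq> {}} = b"
proof
  show "{x\<in>V. Th b ` L \<inter> F x \<noteq> {}} \<subseteq> b" using lift_misses_fibre[OF assms(1,2)] by blast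
  show "b \<subseteq> {x\<in>V. Th b ` L \<inter> F x \<noteq> {}}"
  proof
    fix x assume "x \<in> b"
    then have "card (Th b ` L \<inter> F x) = 1" by (rule lift_meets_fibre[OF assms])
    then show "x \<in> {x\<in>V. Th b ` L \<inter> F x \<noteq> {}}"
      using \<open>x \<in> b\<close> D.block_subset[OF assms(1)] by auto
  qed
qed

lemma lift_inj:
  assumes "b \<in> B" "L \<in> AB" "L \<notin> G" "b' \<in> B" "L' \<in> AB" "L' \<notin> G" "Th b ` L = Th b' ` L'"
  shows "b = b'" "L = L'"
proof -
  show "b = b'" using lift_support[OF assms(1-3)] lift_support[OF assms(4-6)] assms(7) by simp
  then show "L = L'"
    using inj_on_image_eq_iff[OF Th_inj[OF assms(1)] A.block_subset[OF assms(2)]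
        A.block_subset[OF assms(5)]] assms(7) by simp
qed

text \<open>A lifted line outside G is not a fibre: it meets each of k > 1 fibres in one point.\<close>
lemma lift_not_fibre:
  assumes "b \<in> B" "L \<in> AB" "L \<notin> G" "x \<in> V"
  shows "Th b ` L \<noteq> F x"
proof
  assume eq: "Th b ` L = F x"
  then have "x \<in> b" using lift_misses_fibre[OF assms(1,2,4)] fibre_nonempty[OF assms(4)] by blast
  then have "card (F x) = 1" using lift_meets_fibre[OF assms(1-3) \<open>x \<in> b\<close>] eq by simp
  then show False using fibre_card[OF assms(4)] A.k_gt_2 by simp
qed

lemma lifts_of_disjoint_blocks:
  assumes "b \<in> B" "b' \<in> B" "b \<inter> b' = {}" "L \<in> AB" "L' \<in> AB"
  shows "Th b ` L \<inter> Th b' ` L' = {}"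
proof (rule equals0I)
  fix w assume "w \<in> Th b ` L \<inter> Th b' ` L'"
  then obtain x x' where "x \<in> b" "w \<in> F x" "x' \<in> b'" "w \<in> F x'"
    using lift_subset[OF assms(1,4)] lift_subset[OF assms(2,5)] by blast
  moreover from this have "x = x'" using fibre_unique assms(1,2) D.block_subset by blast
  ultimately show False using assms(3) by blast
qed

definition fibre_blocks :: "'c set set" where
  "fibre_blocks = F ` V"

definition lifted_blocks :: "'c set set" where
  "lifted_blocks = {Th b ` L | b L. b \<in> B \<and> L \<in> AB \<and> L \<notin> G}"

definition blocks :: "'c set set" where
  "blocks = lifted_blocks \<union> fibre_blocks"

lemma lifted_blockI: "b \<in> B \<Longrightarrow> L \<in> AB \<Longrightarrow> L \<notin> G \<Longrightarrow> Th b ` L \<in> blocks"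
  unfolding blocks_def lifted_blocks_def by blast

lemma fibre_blockI: "x \<in> V \<Longrightarrow> F x \<in> blocks"
  unfolding blocks_def fibre_blocks_def by blast

lemma blocks_cases:
  assumes "\<beta> \<in> blocks"
  obtains (lifted) b L where "b \<in> B" "L \<in> AB" "L \<notin> G" "\<beta> = Th b ` L"
  | (fibre) x where "x \<in> V" "\<beta> = F x"
  using assms unfolding blocks_def lifted_blocks_def fibre_blocks_def by blast

lemma lifted_not_fibre_block:
  assumes "b \<in> B" "L \<in> AB" "L \<notin> G"
  shows "Th b ` L \<notin> fibre_blocks"
  using lift_not_fibre[OF assms] unfolding fibre_blocks_def by blast

text \<open>Two points in a common fibre lie only on that fibre: a lifted line meets each fibre
  at most once.\<close>
lemma blocks_through_pair_same_fibre:
  assumes x: "x \<in> V" and pq: "p \<in> F x" "q \<in> F x" "p \<noteq> q"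
  shows "{\<beta>\<in>blocks. p \<in> \<beta> \<and> q \<in> \<beta>} = {F x}"
proof (intro equalityI subsetI)
  fix \<beta> assume "\<beta> \<in> {\<beta>\<in>blocks. p \<in> \<beta> \<and> q \<in> \<beta>}"
  then have \<beta>: "\<beta> \<in> blocks" "p \<in> \<beta>" "q \<in> \<beta>" by auto
  from \<beta>(1) show "\<beta> \<in> {F x}"
  proof (cases rule: blocks_cases)
    case (lifted b L)
    then show ?thesis using lift_fibre_at_most_one[OF lifted(1-3) x, of p q] \<beta> pq by blast
  next
    case (fibre y)
    then show ?thesis using fibre_unique[OF fibre(1) x, of p] \<beta> pq by simp
  qed
qed (use x pq fibre_blockI in auto)

text \<open>Points p, q in different fibres F x, F y: if b is the block through x and y, they
  lie only on the image under Th b of the line joining their preimages.\<close>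
lemma blocks_through_pair_different_fibres:
  assumes x: "x \<in> V" "p \<in> F x" and y: "y \<in> V" "q \<in> F y" and xy: "x \<noteq> y"
  shows "\<exists>\<beta>0. {\<beta>\<in>blocks. p \<in> \<beta> \<and> q \<in> \<beta>} = {\<beta>0}"
proof -
  obtain b0 where b0: "b0 \<in> B" "x \<in> b0" "y \<in> b0"
    using D.unique_block[OF x(1) y(1) xy] by auto
  obtain a a' where a: "a \<in> A" "p = Th b0 a" and a': "a' \<in> A" "q = Th b0 a'"
    using Th_image[OF b0(1)] b0 x y by blast
  have "a \<noteq> a'" using a a' x y xy fibre_unique by blast
  then obtain L0 where L0: "L0 \<in> AB" "a \<in> L0" "a' \<in> L0"
    using A.unique_block[OF a(1) a'(1)] by auto
  have pq_in: "p \<in> Th b0 ` L0" "q \<in> Th b0 ` L0" using a a' L0 by auto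
  have "L0 \<notin> G" using G_line_in_one_fibre[OF b0(1) _ x(1) y(1)] pq_in x(2) y(2) xy by blast
  have "{\<beta>\<in>blocks. p \<in> \<beta> \<and> q \<in> \<beta>} = {Th b0 ` L0}"
  proof (intro equalityI subsetI)
    fix \<beta> assume "\<beta> \<in> {\<beta>\<in>blocks. p \<in> \<beta> \<and> q \<in> \<beta>}"
    then have \<beta>: "\<beta> \<in> blocks" "p \<in> \<beta>" "q \<in> \<beta>" by auto
    from \<beta>(1) show "\<beta> \<in> {Th b0 ` L0}"
    proof (cases rule: blocks_cases)
      case (lifted b L)
      have "x \<in> b" "y \<in> b" using lift_misses_fibre[OF lifted(1,2)] lifted(4) \<beta> x y by blast+
      then have b: "b = b0" using D.block_eq[OF lifted(1) b0(1) _ _ b0(2,3) xy] by simp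
      have LA: "L \<subseteq> A" using A.block_subset[OF lifted(2)] .
      have "a \<in> L" "a' \<in> L"
        using inj_on_image_mem_iff[OF Th_inj[OF b0(1)] _ LA] a a' \<beta> lifted(4) b by auto
      then have "L = L0" using A.block_eq[OF lifted(2) L0(1) _ _ L0(2,3) \<open>a \<noteq> a'\<close>] by simp
      then show ?thesis using lifted(4) b by simp
    next
      case (fibre z)
      then have "z = x" "z = y" using fibre_unique \<beta> x y by blast+
      then show ?thesis using xy by simp
    qed
  qed (use lifted_blockI[OF b0(1) L0(1) \<open>L0 \<notin> G\<close>] pq_in in auto)
  then show ?thesis by blast
qed

lemma block_subset_card:
  assumes "\<beta> \<in> blocks"
  shows "\<beta> \<subseteq> W \<and> card \<beta> = k"
  using assms
proof (cases rule: blocks_cases)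
  case (lifted b L)
  have "\<beta> \<subseteq> (\<Union>x\<in>b. F x)" using lift_subset[OF lifted(1,2)] lifted(4) by simp
  also have "\<dots> \<subseteq> W"
    unfolding fibres_cover[symmetric] using D.block_subset[OF lifted(1)] by (rule UN_mono) simp
  finally show ?thesis using lift_card[OF lifted(1,2)] lifted(4) by simp
next
  case (fibre x)
  then have "\<beta> \<subseteq> W" unfolding fibres_cover[symmetric] by blast
  then show ?thesis using fibre fibre_card by simp
qed

theorem design_blocks: "design2 W blocks (k * v) k 1"
  unfolding design2_def
proof (intro conjI ballI impI)
  show "finite W"
    unfolding fibres_cover[symmetric] using D.finite_points fibre_finite by (rule finite_UN_I)
  show "card W = k * v" by (rule card_W)
  show "2 < k" by (rule A.k_gt_2)
  show "k < k * v" using D.n_gt_k A.k_gt_2 by simp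
  show "\<beta> \<subseteq> W" "card \<beta> = k" if "\<beta> \<in> blocks" for \<beta>
    using block_subset_card[OF that] by simp_all
  show "card {\<beta>\<in>blocks. p \<in> \<beta> \<and> q \<in> \<beta>} = 1" if pq: "p \<in> W" "q \<in> W" "p \<noteq> q" for p q
  proof -
    obtain x y where x: "x \<in> V" "p \<in> F x" and y: "y \<in> V" "q \<in> F y"
      using pq(1,2) unfolding fibres_cover[symmetric] by blast
    show ?thesis
    proof (cases "x = y")
      case True
      then show ?thesis using blocks_through_pair_same_fibre[OF x _ pq(3)] y(2) by simp
    next
      case False
      then show ?thesis using blocks_through_pair_different_fibres[OF x y] by force
    qed
  qed
qed

sublocale S: steiner_system W blocks "k * v" k
  by unfold_locales (rule design_blocks)

lemma other_class_line:
  assumes "Q \<in> PA" "Q \<noteq> G" "L \<in> Q"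
  shows "L \<in> AB" "L \<notin> G"
  using assms G_in_PA resolution_A unfolding resolution_def by blast+

definition lifted_class :: "'b set set \<Rightarrow> 'a set set \<Rightarrow> 'c set set" where
  "lifted_class C Q = {Th b ` L | b L. b \<in> C \<and> L \<in> Q}"

definition classes :: "'c set set set" where
  "classes = {lifted_class C Q | C Q. C \<in> P \<and> Q \<in> PA \<and> Q \<noteq> G} \<union> {fibre_blocks}"

lemma fibre_blocks_parallel: "parallel_class W fibre_blocks"
  unfolding parallel_class_def fibre_blocks_def using fibres_cover fibres_disjoint by blast

lemma lifted_class_lifted:
  assumes "C \<in> P" "Q \<in> PA" "Q \<noteq> G" "\<beta> \<in> lifted_class C Q"
  obtains b L where "b \<in> C" "L \<in> Q" "b \<in> B" "L \<in> AB" "L \<notin> G" "\<beta> = Th b ` L"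
  using assms resolution_memD(1)[OF resolution_D] other_class_line unfolding lifted_class_def
  by blast

lemma lifted_class_subset:
  assumes "C \<in> P" "Q \<in> PA" "Q \<noteq> G"
  shows "lifted_class C Q \<subseteq> blocks"
proof
  fix \<beta> assume "\<beta> \<in> lifted_class C Q"
  then obtain b L where "b \<in> B" "L \<in> AB" "L \<notin> G" "\<beta> = Th b ` L"
    using lifted_class_lifted[OF assms] by metis
  then show "\<beta> \<in> blocks" by (simp add: lifted_blockI)
qed

text \<open>A point of F x lies in the lift of a line of Q over the block of C through x.\<close>
lemma lifted_class_covers:
  assumes C: "C \<in> P" and Q: "Q \<in> PA"
  shows "W \<subseteq> \<Union>(lifted_class C Q)"
proof
  fix w assume "w \<in> W"
  then obtain x where x: "x \<in> V" "w \<in> F x" using fibres_cover by blast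
  then obtain b where b: "b \<in> C" "x \<in> b" using resolution_memD(4)[OF resolution_D C] by blast
  then have "b \<in> B" using resolution_memD(1)[OF resolution_D C] by blast
  then have "w \<in> Th b ` A" using Th_image x(2) b(2) by blast
  then obtain a where a: "a \<in> A" "w = Th b a" by blast
  obtain L where L: "L \<in> Q" "a \<in> L" using a(1) resolution_memD(4)[OF resolution_A Q] by blast
  then have "Th b ` L \<in> lifted_class C Q" using b unfolding lifted_class_def by blast
  then show "w \<in> \<Union>(lifted_class C Q)" using a L by blast
qed

text \<open>Lifts over the same block of lines of one direction are disjoint because Th b is
  injective; lifts over different blocks of C are disjoint because those blocks are.\<close>
lemma lifted_class_parallel:
  assumes C: "C \<in> P" and Q: "Q \<in> PA" "Q \<noteq> G"
  shows "parallel_class W (lifted_class C Q)"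
  unfolding parallel_class_def
proof (intro conjI ballI impI)
  show "\<Union>(lifted_class C Q) = W"
    using lifted_class_covers[OF C Q(1)] lifted_class_subset[OF assms] S.block_subset by blast
next
  fix \<beta> \<beta>' assume \<beta>: "\<beta> \<in> lifted_class C Q" "\<beta>' \<in> lifted_class C Q" "\<beta> \<noteq> \<beta>'"
  obtain b L where bL: "b \<in> C" "L \<in> Q" "b \<in> B" "L \<in> AB" "\<beta> = Th b ` L"
    using lifted_class_lifted[OF assms \<beta>(1)] by blast
  obtain b' L' where bL': "b' \<in> C" "L' \<in> Q" "b' \<in> B" "L' \<in> AB" "\<beta>' = Th b' ` L'"
    using lifted_class_lifted[OF assms \<beta>(2)] by blast
  show "\<beta> \<inter> \<beta>' = {}"
  proof (cases "b = b'")
    case True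
    then have "L \<inter> L' = {}"
      using resolution_memD(5)[OF resolution_A Q(1) bL(2) bL'(2)] \<beta>(3) bL(5) bL'(5) by blast
    then show ?thesis
      using inj_on_image_Int[OF Th_inj[OF bL(3)] A.block_subset[OF bL(4)] A.block_subset[OF bL'(4)]]
        True bL(5) bL'(5) by simp
  next
    case False
    then have "b \<inter> b' = {}" using resolution_memD(5)[OF resolution_D C bL(1) bL'(1)] by blast
    then show ?thesis
      using lifts_of_disjoint_blocks[OF bL(3) bL'(3) _ bL(4) bL'(4)] bL(5) bL'(5) by simp
  qed
qed

lemma classes_cases:
  assumes "X \<in> classes"
  obtains (lifted) C Q where "C \<in> P" "Q \<in> PA" "Q \<noteq> G" "X = lifted_class C Q"
  | (fibre) "X = fibre_blocks"
  using assms unfolding classes_def by blast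

text \<open>Distinct classes are disjoint: a lifted block lies in only one lifted class and is
  never a fibre.\<close>
lemma lifted_classes_meet:
  assumes "C \<in> P" "Q \<in> PA" "Q \<noteq> G" "C' \<in> P" "Q' \<in> PA" "Q' \<noteq> G"
    and "\<beta> \<in> lifted_class C Q" "\<beta> \<in> lifted_class C' Q'"
  shows "lifted_class C Q = lifted_class C' Q'"
proof -
  obtain b L where bL: "b \<in> C" "L \<in> Q" "b \<in> B" "L \<in> AB" "L \<notin> G" "\<beta> = Th b ` L"
    using lifted_class_lifted[OF assms(1-3,7)] by blast
  obtain b' L' where bL': "b' \<in> C'" "L' \<in> Q'" "b' \<in> B" "L' \<in> AB" "L' \<notin> G" "\<beta> = Th b' ` L'"
    using lifted_class_lifted[OF assms(4-6,8)] by blast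
  have "b = b'" "L = L'" using lift_inj[OF bL(3-5) bL'(3-5)] bL(6) bL'(6) by simp_all
  then have "C = C'" "Q = Q'"
    using resolution_class_unique[OF resolution_D assms(1,4) bL(1)] bL'(1)
      resolution_class_unique[OF resolution_A assms(2,5) bL(2)] bL'(2) by simp_all
  then show ?thesis by simp
qed

lemma lifted_class_not_fibre:
  assumes "C \<in> P" "Q \<in> PA" "Q \<noteq> G"
  shows "lifted_class C Q \<inter> fibre_blocks = {}"
  using lifted_class_lifted[OF assms] lifted_not_fibre_block by blast

text \<open>Every block lies in some class: the lift Th b ` L in the class of b and the direction
  of L.\<close>
lemma Union_classes: "\<Union>classes = blocks"
proof
  show "\<Union>classes \<subseteq> blocks"
  proof
    fix \<beta> assume "\<beta> \<in> \<Union>classes"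
    then obtain X where X: "X \<in> classes" "\<beta> \<in> X" by blast
    from X(1) show "\<beta> \<in> blocks"
    proof (cases rule: classes_cases)
      case (lifted C Q)
      then show ?thesis using lifted_class_subset[OF lifted(1-3)] X(2) by blast
    qed (use X(2) in \<open>simp add: blocks_def\<close>)
  qed
  show "blocks \<subseteq> \<Union>classes"
  proof
    fix \<beta> assume "\<beta> \<in> blocks"
    then show "\<beta> \<in> \<Union>classes"
    proof (cases rule: blocks_cases)
      case (lifted b L)
      obtain C where C: "C \<in> P" "b \<in> C" using lifted(1) resolution_D unfolding resolution_def by blast
      obtain Q where Q: "Q \<in> PA" "L \<in> Q" using lifted(2) resolution_A unfolding resolution_def by blast
      then have "Q \<noteq> G" using lifted(3) by blast
      then have "lifted_class C Q \<in> classes" using C Q unfolding classes_def by blast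
      moreover have "\<beta> \<in> lifted_class C Q" using C Q lifted(4) unfolding lifted_class_def by blast
      ultimately show ?thesis by blast
    next
      case (fibre x)
      then show ?thesis unfolding classes_def fibre_blocks_def by blast
    qed
  qed
qed

lemma classes_disjoint:
  assumes X: "X \<in> classes" "X' \<in> classes" "X \<noteq> X'"
  shows "X \<inter> X' = {}"
  using X(1)
proof (cases rule: classes_cases)
  case (lifted C Q)
  show ?thesis using X(2)
  proof (cases rule: classes_cases)
    case lifted': (lifted C' Q')
    show ?thesis using lifted_classes_meet[OF lifted(1-3) lifted'(1-3)] lifted(4) lifted'(4) X(3) by blast
  next
    case fibre
    then show ?thesis using lifted_class_not_fibre[OF lifted(1-3)] lifted(4) by simp
  qed
next
  case fibre
  show ?thesis using X(2)
  proof (cases rule: classes_cases)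
    case (lifted C' Q')
    then show ?thesis using lifted_class_not_fibre[OF lifted(1-3)] fibre by blast
  qed (use fibre X(3) in simp)
qed

theorem resolution_blocks: "resolution W blocks classes"
  unfolding resolution_def
proof (intro conjI ballI impI)
  fix X assume X: "X \<in> classes"
  then show par: "parallel_class W X"
    using lifted_class_parallel fibre_blocks_parallel by (cases rule: classes_cases) simp_all
  have "W \<noteq> {}" using card_W A.k_gt_2 D.n_gt_k by auto
  then show "X \<noteq> {}" using par unfolding parallel_class_def by auto
qed (use Union_classes classes_disjoint in auto)

subsection \<open>A silver colouring of the 1-block intersection graph\<close>

definition class_of :: "'b set \<Rightarrow> 'b set set" where
  "class_of b = (THE C. C \<in> P \<and> b \<in> C)"

lemma class_of_eq:
  assumes "C \<in> P" "b \<in> C"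
  shows "class_of b = C"
  unfolding class_of_def
proof (rule the_equality)
  show "C \<in> P \<and> b \<in> C" using assms ..
  show "C' = C" if "C' \<in> P \<and> b \<in> C'" for C'
    using resolution_class_unique[OF resolution_D] that assms by blast
qed

lemma class_of:
  assumes "b \<in> B"
  shows "class_of b \<in> P" "b \<in> class_of b"
proof -
  obtain C where "C \<in> P" "b \<in> C" using assms resolution_D unfolding resolution_def by blast
  then show "class_of b \<in> P" "b \<in> class_of b" using class_of_eq by simp_all
qed

text \<open>The colouring: fibres get a colour of their own, and the lift of the line L over the
  block b gets the pair (parallel class of b, L).\<close>
definition colour :: "'c set \<Rightarrow> ('b set set \<times> 'a set) option" where
  "colour \<beta> = (if \<beta> \<in> fibre_blocks then None
     else let b = {x\<in>V. \<beta> \<inter> F x \<noteq> {}} in Some (class_of b, inv_into A (Th b) ` \<beta>))"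

lemma colour_fibre: "x \<in> V \<Longrightarrow> colour (F x) = None"
  unfolding colour_def fibre_blocks_def by simp

lemma colour_lift:
  assumes "b \<in> B" "L \<in> AB" "L \<notin> G"
  shows "colour (Th b ` L) = Some (class_of b, L)"
  using lifted_not_fibre_block[OF assms] lift_support[OF assms]
    inv_into_image_cancel[OF Th_inj[OF assms(1)] A.block_subset[OF assms(2)]]
  unfolding colour_def by simp

lemma nbhd_fibre:
  assumes x: "x \<in> V"
  shows "nbhd blocks (one_BIG_adj blocks) (F x) = {Th b ` L | b L. b \<in> B \<and> x \<in> b \<and> L \<in> AB \<and> L \<notin> G}"
proof (intro equalityI subsetI)
  fix \<beta> assume "\<beta> \<in> nbhd blocks (one_BIG_adj blocks) (F x)"
  then have \<beta>: "\<beta> \<in> blocks" "F x \<noteq> \<beta>" "F x \<inter> \<beta> \<noteq> {}" unfolding nbhd_def S.adj_iff by auto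
  from \<beta>(1) show "\<beta> \<in> {Th b ` L | b L. b \<in> B \<and> x \<in> b \<and> L \<in> AB \<and> L \<notin> G}"
  proof (cases rule: blocks_cases)
    case (lifted b L)
    then have "x \<in> b" using lift_misses_fibre[OF lifted(1,2) x] \<beta>(3) by blast
    then show ?thesis using lifted by blast
  next
    case (fibre y)
    then show ?thesis using fibres_disjoint[OF x fibre(1)] \<beta>(2,3) by auto
  qed
next
  fix \<beta> assume "\<beta> \<in> {Th b ` L | b L. b \<in> B \<and> x \<in> b \<and> L \<in> AB \<and> L \<notin> G}"
  then obtain b L where bL: "b \<in> B" "x \<in> b" "L \<in> AB" "L \<notin> G" "\<beta> = Th b ` L" by blast
  have "card (Th b ` L \<inter> F x) = 1" using lift_meets_fibre[OF bL(1,3,4,2)] .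
  then have "Th b ` L \<inter> F x \<noteq> {}" by auto
  then have "F x \<inter> \<beta> \<noteq> {}" using bL(5) by (simp add: Int_commute)
  moreover have "F x \<noteq> \<beta>" using lift_not_fibre[OF bL(1,3,4) x] bL(5) by simp
  ultimately show "\<beta> \<in> nbhd blocks (one_BIG_adj blocks) (F x)"
    unfolding nbhd_def S.adj_iff using bL lifted_blockI fibre_blockI[OF x] by auto
qed

text \<open>Adjacent blocks get different colours: two lifts with the same colour come from blocks
  of one parallel class, which are equal or disjoint.\<close>
lemma colour_proper:
  assumes "\<beta> \<in> blocks" "\<beta>' \<in> blocks" "one_BIG_adj blocks \<beta> \<beta>'"
  shows "colour \<beta> \<noteq> colour \<beta>'"
proof -
  have ne: "\<beta> \<noteq> \<beta>'" and meet: "\<beta> \<inter> \<beta>' \<noteq> {}" using assms(3) unfolding S.adj_iff by auto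
  show ?thesis using assms(1)
  proof (cases rule: blocks_cases)
    case (lifted b L)
    show ?thesis using assms(2)
    proof (cases rule: blocks_cases)
      case lifted': (lifted b' L')
      show ?thesis
      proof
        assume "colour \<beta> = colour \<beta>'"
        then have same: "class_of b = class_of b'" "L = L'"
          using colour_lift[OF lifted(1-3)] colour_lift[OF lifted'(1-3)] lifted(4) lifted'(4) by simp_all
        have "b \<noteq> b'" using ne same(2) lifted(4) lifted'(4) by blast
        moreover have "b' \<in> class_of b" using class_of(2)[OF lifted'(1)] same(1) by simp
        ultimately have "b \<inter> b' = {}"
          using resolution_memD(5)[OF resolution_D class_of(1)[OF lifted(1)] class_of(2)[OF lifted(1)]] by blast
        then show False
          using lifts_of_disjoint_blocks[OF lifted(1) lifted'(1) _ lifted(2) lifted'(2)] lifted(4) lifted'(4)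
            meet by simp
      qed
    next
      case (fibre y)
      then show ?thesis using colour_lift[OF lifted(1-3)] colour_fibre lifted(4) by simp
    qed
  next
    case (fibre x)
    show ?thesis using assms(2)
    proof (cases rule: blocks_cases)
      case (lifted b' L')
      then show ?thesis using colour_lift[OF lifted(1-3)] colour_fibre fibre by simp
    next
      case fibre': (fibre y)
      then show ?thesis using fibres_disjoint[OF fibre(1) fibre'(1)] fibre(2) meet ne by auto
    qed
  qed
qed

lemma closed_nbhd_fibre:
  assumes x: "x \<in> V" and \<beta>: "\<beta> \<in> insert (F x) (nbhd blocks (one_BIG_adj blocks) (F x))"
  obtains (centre) "\<beta> = F x"
  | (lifted) b L where "b \<in> B" "x \<in> b" "L \<in> AB" "L \<notin> G" "\<beta> = Th b ` L"
  using \<beta> unfolding nbhd_fibre[OF x] by blast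

text \<open>Two lifts through the fibre F x with the same colour lie over blocks through x of
  the same parallel class; these blocks coincide.\<close>
lemma colour_inj_closed_nbhd:
  assumes x: "x \<in> V"
  shows "inj_on colour (insert (F x) (nbhd blocks (one_BIG_adj blocks) (F x)))"
proof (rule inj_onI)
  fix \<beta> \<beta>' assume \<beta>: "\<beta> \<in> insert (F x) (nbhd blocks (one_BIG_adj blocks) (F x))"
    and \<beta>': "\<beta>' \<in> insert (F x) (nbhd blocks (one_BIG_adj blocks) (F x))"
    and eq: "colour \<beta> = colour \<beta>'"
  show "\<beta> = \<beta>'"
    using x \<beta>
  proof (cases rule: closed_nbhd_fibre)
    case centre
    show ?thesis using x \<beta>'
    proof (cases rule: closed_nbhd_fibre)
      case (lifted b' L')
      then show ?thesis using eq colour_fibre[OF x] colour_lift[OF lifted(1,3,4)] centre by simp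
    qed (use centre in simp)
  next
    case (lifted b L)
    show ?thesis using x \<beta>'
    proof (cases rule: closed_nbhd_fibre)
      case centre
      then show ?thesis using eq colour_fibre[OF x] colour_lift[OF lifted(1,3,4)] lifted(5) by simp
    next
      case lifted': (lifted b' L')
      have same: "class_of b = class_of b'" "L = L'"
        using eq colour_lift[OF lifted(1,3,4)] colour_lift[OF lifted'(1,3,4)] lifted(5) lifted'(5)
        by simp_all
      have "b' \<in> class_of b" using class_of(2)[OF lifted'(1)] same(1) by simp
      then have "b = b'"
        using parallel_class_unique[OF resolution_memD(3)[OF resolution_D class_of(1)[OF lifted(1)]]
            class_of(2)[OF lifted(1)] _ lifted(2) lifted'(2)] by blast
      then show ?thesis using lifted(5) lifted'(5) same(2) by simp
    qed
  qed
qed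

text \<open>Every colour occurs around F x: the colour (C, L) on the lift of L over the block of C
  through x.\<close>
lemma colour_closed_nbhd_onto:
  assumes x: "x \<in> V"
  shows "colour ` insert (F x) (nbhd blocks (one_BIG_adj blocks) (F x)) = colour ` blocks"
proof
  show "colour ` insert (F x) (nbhd blocks (one_BIG_adj blocks) (F x)) \<subseteq> colour ` blocks"
    using fibre_blockI[OF x] unfolding nbhd_def by blast
  show "colour ` blocks \<subseteq> colour ` insert (F x) (nbhd blocks (one_BIG_adj blocks) (F x))"
  proof
    fix c assume "c \<in> colour ` blocks"
    then obtain \<beta> where \<beta>: "\<beta> \<in> blocks" "c = colour \<beta>" by blast
    from \<beta>(1) show "c \<in> colour ` insert (F x) (nbhd blocks (one_BIG_adj blocks) (F x))"
    proof (cases rule: blocks_cases)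
      case (lifted b L)
      let ?C = "class_of b"
      obtain b' where b': "b' \<in> ?C" "x \<in> b'"
        using resolution_memD(4)[OF resolution_D class_of(1)[OF lifted(1)]] x by blast
      have "b' \<in> B" using resolution_memD(1)[OF resolution_D class_of(1)[OF lifted(1)]] b'(1) by blast
      moreover have "class_of b' = ?C" using class_of_eq[OF class_of(1)[OF lifted(1)] b'(1)] .
      ultimately have "colour (Th b' ` L) = c"
        using colour_lift[OF _ lifted(2,3)] colour_lift[OF lifted(1-3)] lifted(4) \<beta>(2) by simp
      moreover have "Th b' ` L \<in> nbhd blocks (one_BIG_adj blocks) (F x)"
        unfolding nbhd_fibre[OF x] using \<open>b' \<in> B\<close> b'(2) lifted(2,3) by blast
      ultimately show ?thesis by blast
    next
      case (fibre y)
      then have "c = colour (F x)" using \<beta>(2) colour_fibre x by simp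
      then show ?thesis by blast
    qed
  qed
qed

theorem silver_blocks: "silver blocks (one_BIG_adj blocks)"
proof (rule silverI[where col = colour and I = fibre_blocks])
  show "finite blocks" by (rule S.finite_blocks)
  show "regular blocks (one_BIG_adj blocks) (k * (S.replication - 1))" by (rule S.BIG_regular)
  show "alpha_set blocks (one_BIG_adj blocks) fibre_blocks"
    using S.parallel_class_alpha_set fibre_blocks_parallel unfolding blocks_def by blast
  show "fibre_blocks \<noteq> {}" using D.n_gt_k D.card_points unfolding fibre_blocks_def by auto
  show "\<not> one_BIG_adj blocks \<beta> \<beta>" for \<beta> unfolding one_BIG_adj_def by blast
  show "colour \<beta> \<noteq> colour \<beta>'" if "\<beta> \<in> blocks" "\<beta>' \<in> blocks" "one_BIG_adj blocks \<beta> \<beta>'" for \<beta> \<beta>'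
    using colour_proper that .
  show "bij_betw colour (insert \<beta> (nbhd blocks (one_BIG_adj blocks) \<beta>)) (colour ` blocks)"
    if \<beta>: "\<beta> \<in> fibre_blocks" for \<beta>
  proof -
    obtain x where "x \<in> V" "\<beta> = F x" using \<beta> unfolding fibre_blocks_def by blast
    then show ?thesis
      unfolding bij_betw_def using colour_inj_closed_nbhd colour_closed_nbhd_onto by simp
  qed
qed

end

lemma nat_fibre_partition:
  assumes "finite V"
  obtains F :: "'b \<Rightarrow> nat set" where
    "\<And>x. x \<in> V \<Longrightarrow> card (F x) = k"
    "\<And>x y. x \<in> V \<Longrightarrow> y \<in> V \<Longrightarrow> x \<noteq> y \<Longrightarrow> F x \<inter> F y = {}"
    "\<Union>(F ` V) = {0..<k * card V}"
proof -
  obtain h where h: "bij_betw h (V \<times> {0..<k}) {0..<card (V \<times> {0..<k})}"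
    using ex_bij_betw_finite_nat assms by (metis finite_SigmaI finite_atLeastLessThan)
  have inj: "inj_on h (V \<times> {0..<k})" using bij_betw_imp_inj_on[OF h] .
  define F where "F x = h ` ({x} \<times> {0..<k})" for x
  show ?thesis
  proof (rule that[of F])
    show "card (F x) = k" if "x \<in> V" for x
      unfolding F_def using that by (subst card_image[OF inj_on_subset[OF inj]]) auto
    show "F x \<inter> F y = {}" if "x \<in> V" "y \<in> V" "x \<noteq> y" for x y
      unfolding F_def using that inj_on_image_Int[OF inj, of "{x} \<times> {0..<k}" "{y} \<times> {0..<k}"]
      by auto
    have "\<Union>(F ` V) = h ` (V \<times> {0..<k})" unfolding F_def by blast
    then show "\<Union>(F ` V) = {0..<k * card V}"
      using bij_betw_imp_surj_on[OF h] by (simp add: card_cartesian_product mult.commute)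
  qed
qed

text \<open>For a block b (with as many points as G has lines) a bijection from the affine plane
  onto the fibres over b that maps the lines of G onto the fibres: match the lines of G
  with the points of b, and each line with its fibre.\<close>
lemma local_bijection:
  assumes G: "parallel_class A G" "finite G" "card G = card b" "finite b"
    and lines: "\<And>g. g \<in> G \<Longrightarrow> finite g \<and> card g = k"
    and fibres: "\<And>x. x \<in> b \<Longrightarrow> finite (F x) \<and> card (F x) = k"
    and disjoint: "\<And>x y. x \<in> b \<Longrightarrow> y \<in> b \<Longrightarrow> x \<noteq> y \<Longrightarrow> F x \<inter> F y = {}"
  obtains \<theta> where "bij_betw \<theta> A (\<Union>x\<in>b. F x)" "\<And>g. g \<in> G \<Longrightarrow> \<exists>x\<in>b. \<theta> ` g = F x"
proof -
  obtain \<phi> where \<phi>: "bij_betw \<phi> G b" using finite_same_card_bij[OF G(2,4,3)] by blast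
  have "\<forall>g\<in>G. \<exists>\<psi>. bij_betw \<psi> g (F (\<phi> g))"
  proof
    fix g assume "g \<in> G"
    then have "\<phi> g \<in> b" using bij_betw_apply[OF \<phi>] by blast
    then show "\<exists>\<psi>. bij_betw \<psi> g (F (\<phi> g))"
      using lines[OF \<open>g \<in> G\<close>] fibres by (intro finite_same_card_bij) auto
  qed
  then obtain \<psi> where \<psi>: "\<forall>g\<in>G. bij_betw (\<psi> g) g (F (\<phi> g))" by (rule bchoice[THEN exE])
  define \<theta> where "\<theta> a = \<psi> (THE g. g \<in> G \<and> a \<in> g) a" for a
  have \<theta>_on_line: "bij_betw \<theta> g (F (\<phi> g))" if g: "g \<in> G" for g
  proof (rule bij_betw_cong[THEN iffD1, OF _ bspec[OF \<psi> g]])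
    show "\<psi> g a = \<theta> a" if "a \<in> g" for a
    proof -
      have "(THE g. g \<in> G \<and> a \<in> g) = g"
        using parallel_class_unique[OF G(1) _ g _ that] g that by (intro the_equality) blast+
      then show ?thesis unfolding \<theta>_def by simp
    qed
  qed
  have "disjoint_family_on (\<lambda>g. F (\<phi> g)) G"
    unfolding disjoint_family_on_def
  proof (intro ballI impI)
    fix g g' assume "g \<in> G" "g' \<in> G" "g \<noteq> g'"
    then have "\<phi> g \<noteq> \<phi> g'" "\<phi> g \<in> b" "\<phi> g' \<in> b"
      using inj_onD[OF bij_betw_imp_inj_on[OF \<phi>]] bij_betw_apply[OF \<phi>] by blast+
    then show "F (\<phi> g) \<inter> F (\<phi> g') = {}" using disjoint by blast
  qed
  then have "bij_betw \<theta> (\<Union>g\<in>G. g) (\<Union>g\<in>G. F (\<phi> g))"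
    using \<theta>_on_line by (rule bij_betw_UNION_disjoint)
  moreover have "(\<Union>g\<in>G. g) = A" using G(1) unfolding parallel_class_def by simp
  moreover have "(\<Union>g\<in>G. F (\<phi> g)) = (\<Union>x\<in>b. F x)"
    unfolding bij_betw_imp_surj_on[OF \<phi>, symmetric] by (simp add: image_image)
  ultimately have "bij_betw \<theta> A (\<Union>x\<in>b. F x)" by simp
  moreover have "\<exists>x\<in>b. \<theta> ` g = F x" if "g \<in> G" for g
    using bij_betw_imp_surj_on[OF \<theta>_on_line[OF that]] bij_betw_apply[OF \<phi> that] by blast
  ultimately show ?thesis by (rule that)
qed

lemma product_construction_exists:
  fixes A :: "'a set" and V :: "'b set"
  assumes "affine_plane_design A AB k" "steiner_system V B v k" "resolution V B P"
  obtains PA G and F :: "'b \<Rightarrow> nat set" and Th :: "'b set \<Rightarrow> 'a \<Rightarrow> nat"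
  where "product_construction A AB k V B v PA G P {0..<k * v} F Th"
proof -
  interpret A: affine_plane_design A AB k by (rule assms(1))
  interpret D: steiner_system V B v k by (rule assms(2))
  obtain PA G where PA: "resolution A AB PA" "G \<in> PA" "card G = k"
    and G: "\<And>L g. L \<in> AB \<Longrightarrow> L \<notin> G \<Longrightarrow> g \<in> G \<Longrightarrow> L \<inter> g \<noteq> {}"
    by (rule A.resolution_with_transversal_class) blast
  have G_lines: "G \<subseteq> AB" "parallel_class A G" using resolution_memD(1,3)[OF PA(1,2)] .
  then have "finite G" using A.finite_blocks finite_subset by blast
  obtain F :: "'b \<Rightarrow> nat set" where F: "\<And>x. x \<in> V \<Longrightarrow> card (F x) = k"
    "\<And>x y. x \<in> V \<Longrightarrow> y \<in> V \<Longrightarrow> x \<noteq> y \<Longrightarrow> F x \<inter> F y = {}" "\<Union>(F ` V) = {0..<k * card V}"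
    by (rule nat_fibre_partition[OF D.finite_points, where k = k]) blast
  have "\<exists>\<theta>. bij_betw \<theta> A (\<Union>x\<in>b. F x) \<and> (\<forall>g\<in>G. \<exists>x\<in>b. \<theta> ` g = F x)" if b: "b \<in> B" for b
  proof -
    have "card G = card b" using PA(3) D.block_card[OF b] by simp
    moreover have "finite g \<and> card g = k" if "g \<in> G" for g
      using that G_lines(1) A.block_finite A.block_card by blast
    moreover have "finite (F x) \<and> card (F x) = k" if "x \<in> b" for x
    proof -
      have "card (F x) = k" using F(1) D.block_subset[OF b] that by blast
      then show ?thesis using A.k_gt_2 card.infinite by fastforce
    qed
    moreover have "F x \<inter> F y = {}" if "x \<in> b" "y \<in> b" "x \<noteq> y" for x y
      using F(2) D.block_subset[OF b] that by blast
    ultimately obtain \<theta> where "bij_betw \<theta> A (\<Union>x\<in>b. F x)" "\<And>g. g \<in> G \<Longrightarrow> \<exists>x\<in>b. \<theta> ` g = F x"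
      using local_bijection[OF G_lines(2) \<open>finite G\<close> _ D.block_finite[OF b]] by blast
    then show ?thesis by blast
  qed
  then obtain Th where Th: "\<forall>b\<in>B. bij_betw (Th b) A (\<Union>x\<in>b. F x) \<and> (\<forall>g\<in>G. \<exists>x\<in>b. Th b ` g = F x)"
    by (metis bchoice)
  have "product_construction A AB k V B v PA G P {0..<k * v} F Th"
    by (intro product_construction.intro product_construction_axioms.intro assms(1,2))
      (use PA G assms(3) F Th D.card_points in auto)
  then show ?thesis by (rule that)
qed

theorem theorem3:
  fixes A :: "'a set" and AB :: "'a set set"
    and V :: "'b set" and B :: "'b set set" and k v :: nat
  assumes "affine_plane A AB k"
    and "RBIBD V B v k 1"
  shows "\<exists>(W::nat set) D. RBIBD W D (k * v) k 1 \<and> silver D (one_BIG_adj D)"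
proof -
  have "affine_plane_design A AB k"
    using assms(1) unfolding affine_plane_def by unfold_locales
  moreover have "steiner_system V B v k"
    using assms(2) unfolding RBIBD_def by unfold_locales simp
  moreover obtain P where "resolution V B P"
    using assms(2) unfolding RBIBD_def resolvable_iff_resolution by blast
  ultimately obtain PA G F Th where "product_construction A AB k V B v PA G P {0..<k * v} F Th"
    by (rule product_construction_exists)
  then interpret product_construction A AB k V B v PA G P "{0..<k * v}" F Th .
  show ?thesis
    using design_blocks resolution_blocks silver_blocks
    unfolding RBIBD_def resolvable_iff_resolution by blast
qed

end
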